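(* Let $p>1$ and $\lambda<\pi^2$ be fixed. For $h\in[0,1)$ let $a_h(x)=1$ for $x\in[0,\tfrac{1-h}{2}]\cup[\tfrac{1+h}{2},1]$ and $a_h(x)=0$ for $x\in(\tfrac{1-h}{2},\tfrac{1+h}{2})$, and for every $h\in[0,1)$ let $u_h$ be a positive solution of $$-u''=\lambda u+a_h(x)u^p \ \text{ in } (0,1),\qquad u(0)=u(1)=0.$$ Then $\lim_{h\uparrow1}\|u_h\|_\infty=+\infty$ and, moreover, $\lim_{h\uparrow1}u_h(x)=+\infty$ for all $x\in(0,1)$.
   Context: A solution is a function $u\in\mathcal{C}^1([0,1])$ with $u'$ absolutely continuous satisfying the equation a.e. and the boundary conditions; a positive solution satisfies $u(x)>0$ for all $x\in(0,1)$. The choice of $u_h$ for each $h$ is arbitrary among the positive solutions. *)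

theory Defs
  imports "HOL-Analysis.Analysis"
begin

definition a_coef :: "real \<Rightarrow> real \<Rightarrow> real" where
  "a_coef h x = (if (1 - h) / 2 < x \<and> x < (1 + h) / 2 then 0 else 1)"

text \<open>u is C^1 on [0,1] with derivative v, v absolutely continuous with
  v' = -(lambda u + a u^p) a.e.; equivalently v(x) = v(0) + Lebesgue integral
  of an integrable function equal a.e. to -(lambda u + a u^p).\<close>
definition is_solution :: "real \<Rightarrow> real \<Rightarrow> (real \<Rightarrow> real) \<Rightarrow> (real \<Rightarrow> real) \<Rightarrow> bool" where
  "is_solution p lam a u \<longleftrightarrow>
     (\<exists>v. (\<forall>x\<in>{0..1}. (u has_real_derivative v x) (at x within {0..1}))
        \<and> continuous_on {0..1} v
        \<and> set_integrable lborel {0..1} (\<lambda>t. lam * u t + a t * u t powr p)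
        \<and> (\<forall>x\<in>{0..1}. v x = v 0 - (LINT t:{0..x}|lborel. lam * u t + a t * u t powr p)))
     \<and> u 0 = 0 \<and> u 1 = 0"

definition is_positive_solution :: "real \<Rightarrow> real \<Rightarrow> (real \<Rightarrow> real) \<Rightarrow> (real \<Rightarrow> real) \<Rightarrow> bool" where
  "is_positive_solution p lam a u \<longleftrightarrow> is_solution p lam a u \<and> (\<forall>x\<in>{0<..<1}. u x > 0)"

definition sup_norm01 :: "(real \<Rightarrow> real) \<Rightarrow> real" where
  "sup_norm01 u = (SUP x\<in>{0..1}. \<bar>u x\<bar>)"

end

theory Submission
  imports Defs "HOL-Real_Asymp.Real_Asymp"
begin

(* Write d = (1 - h)/2: the coefficient a_h is 1 on the two boundary layers of width d and 0 on
   the middle interval of length h. There the equation is linear, -u'' = lam u, and Wronskian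
   identities with the fundamental solution osc_sin lam (positive on (0,1] as lam < pi^2) express u
   and u' on the middle interval through the two values u(d), u(1 - d). In particular
   |u'| <= B M at the inner end of the layer where u is larger, M = max (u(d), u(1 - d)).
   On that layer the energy u'^2 + lam u^2 + 2/(p+1) u^(p+1) is conserved, and since u vanishes
   at the outer end, the mean value theorem bounds max u by d sup |u'|. Together this gives
   1 <= d^2 (K + c M^(p-1)) with constants K, c > 0, so M -> oo as d -> 0, and the
   representation of u on the middle interval then yields u(x) >= kappa M for each fixed x. *)

(* The solutions of y'' = - l y with y(0) = 0, y'(0) = 1, resp. y(0) = 1, y'(0) = 0. *)
definition osc_sin :: "real \<Rightarrow> real \<Rightarrow> real" where
  "osc_sin l t = (if l > 0 then sin (sqrt l * t) / sqrt l else if l = 0 then t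
                  else sinh (sqrt (- l) * t) / sqrt (- l))"

definition osc_cos :: "real \<Rightarrow> real \<Rightarrow> real" where
  "osc_cos l t = (if l > 0 then cos (sqrt l * t) else if l = 0 then 1
                  else cosh (sqrt (- l) * t))"

lemma osc_sin_0 [simp]: "osc_sin l 0 = 0"
  and osc_cos_0 [simp]: "osc_cos l 0 = 1"
  by (simp_all add: osc_sin_def osc_cos_def)

lemma has_real_derivative_osc_sin: "(osc_sin l has_real_derivative osc_cos l t) (at t)"
  and has_real_derivative_osc_cos: "(osc_cos l has_real_derivative - l * osc_sin l t) (at t)"
proof -
  consider "l > 0" | "l = 0" | "l < 0" by linarith
  then have "(osc_sin l has_real_derivative osc_cos l t) (at t) \<and>
             (osc_cos l has_real_derivative - l * osc_sin l t) (at t)"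
  proof cases
    case 1
    then have "sqrt l * sqrt l = l" by simp
    with 1 show ?thesis unfolding osc_sin_def osc_cos_def
      by (auto intro!: derivative_eq_intros simp: field_simps)
  next
    case 2
    then show ?thesis unfolding osc_sin_def osc_cos_def by (auto intro!: derivative_eq_intros)
  next
    case 3
    then have "sqrt (- l) * sqrt (- l) = - l" by simp
    with 3 show ?thesis unfolding osc_sin_def osc_cos_def
      by (auto intro!: derivative_eq_intros simp: field_simps mult.assoc[symmetric])
  qed
  then show "(osc_sin l has_real_derivative osc_cos l t) (at t)"
    and "(osc_cos l has_real_derivative - l * osc_sin l t) (at t)" by blast+
qed

lemma continuous_on_osc_sin: "continuous_on A (osc_sin l)"
  and continuous_on_osc_cos: "continuous_on A (osc_cos l)"
  by (meson DERIV_continuous continuous_at_imp_continuous_on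
      has_real_derivative_osc_sin has_real_derivative_osc_cos)+

lemma osc_sin_pos:
  assumes "l < pi^2" "0 < t" "t \<le> 1"
  shows "osc_sin l t > 0"
proof (cases "l > 0")
  case True
  have "sqrt l < sqrt (pi^2)" using assms(1) by (simp only: real_sqrt_less_iff)
  then have "sqrt l < pi" by simp
  moreover have "sqrt l * t \<le> sqrt l" using assms True by (simp add: mult_left_le)
  ultimately have "sqrt l * t < pi" by linarith
  then have "sin (sqrt l * t) > 0" using True assms by (intro sin_gt_zero) auto
  then show ?thesis using True by (simp add: osc_sin_def)
qed (use assms in \<open>auto simp: osc_sin_def\<close>)

lemma osc_sin_lower_bound:
  assumes "l < pi^2" "0 < \<eta>" "\<eta> \<le> 1"
  obtains s where "s > 0" "\<And>t. t \<in> {\<eta>..1} \<Longrightarrow> s \<le> osc_sin l t"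
proof -
  obtain t0 where "t0 \<in> {\<eta>..1}" "\<And>t. t \<in> {\<eta>..1} \<Longrightarrow> osc_sin l t0 \<le> osc_sin l t"
    using continuous_attains_inf[OF compact_Icc _ continuous_on_osc_sin, of \<eta> 1 l] assms by auto
  with osc_sin_pos[OF assms(1), of t0] assms show ?thesis by (intro that) auto
qed

lemma osc_abs_bounds:
  obtains C where "\<And>t. t \<in> {0..1} \<Longrightarrow> \<bar>osc_sin l t\<bar> \<le> C"
    "\<And>t. t \<in> {0..1} \<Longrightarrow> \<bar>osc_cos l t\<bar> \<le> C"
proof -
  have "bounded (osc_sin l ` {0..1})" "bounded (osc_cos l ` {0..1})"
    by (intro compact_imp_bounded compact_continuous_image compact_Icc
        continuous_on_osc_sin continuous_on_osc_cos)+
  then obtain C1 C2 where "\<forall>t\<in>{0..1}. \<bar>osc_sin l t\<bar> \<le> C1" "\<forall>t\<in>{0..1}. \<bar>osc_cos l t\<bar> \<le> C2"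
    unfolding bounded_iff by auto
  then show ?thesis
    by (intro that[of "max C1 C2"]) (auto simp: le_max_iff_disj)
qed

lemma has_real_derivative_of_integral_eq:
  fixes f v :: "real \<Rightarrow> real"
  assumes f: "f integrable_on {a..b}" "isCont f x"
    and v: "\<And>y. y \<in> {a..b} \<Longrightarrow> v y = v a - integral {a..y} f" and x: "x \<in> {a<..<b}"
  shows "(v has_real_derivative - f x) (at x)"
proof -
  have "((\<lambda>y. integral {a..y} f) has_vector_derivative f x) (at x within {a..b})"
    using integral_has_vector_derivative_continuous_at[of f a b x "{}"] f x
    by (simp add: continuous_at_imp_continuous_at_within)
  then have "((\<lambda>y. integral {a..y} f) has_real_derivative f x) (at x within {a..b})"
    by (simp add: has_real_derivative_iff_has_vector_derivative)
  then have "((\<lambda>y. v a - integral {a..y} f) has_real_derivative - f x) (at x within {a..b})"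
    by (auto intro!: derivative_eq_intros)
  then have "(v has_real_derivative - f x) (at x within {a..b})"
  proof (rule has_field_derivative_transform_within[where d = 1])
    show "v a - integral {a..y} f = v y" if "y \<in> {a..b}" for y
      using v[OF that] by simp
  qed (use x in auto)
  moreover have "at x within {a..b} = at x" using x by (intro at_within_interior) auto
  ultimately show ?thesis by simp
qed

definition classical_positive_solution ::
  "real \<Rightarrow> real \<Rightarrow> (real \<Rightarrow> real) \<Rightarrow> (real \<Rightarrow> real) \<Rightarrow> (real \<Rightarrow> real) \<Rightarrow> bool" where
  "classical_positive_solution p lam a u v \<longleftrightarrow>
     continuous_on {0..1} u \<and> continuous_on {0..1} v
     \<and> (\<forall>x\<in>{0<..<1}. (u has_real_derivative v x) (at x))
     \<and> (\<forall>x\<in>{0<..<1}. isCont a x \<longrightarrow>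
          (v has_real_derivative - (lam * u x + a x * u x powr p)) (at x))
     \<and> u 0 = 0 \<and> u 1 = 0 \<and> (\<forall>x\<in>{0<..<1}. u x > 0)"

lemma positive_solution_imp_classical:
  assumes "is_positive_solution p lam a u"
  obtains v where "classical_positive_solution p lam a u v"
proof -
  define f where "f t = lam * u t + a t * u t powr p" for t
  have bc: "u 0 = 0" "u 1 = 0" and pos: "\<And>x. x \<in> {0<..<1} \<Longrightarrow> u x > 0"
    using assms unfolding is_positive_solution_def is_solution_def by simp_all
  have "\<exists>v. (\<forall>x\<in>{0..1}. (u has_real_derivative v x) (at x within {0..1}))
      \<and> continuous_on {0..1} v \<and> set_integrable lborel {0..1} f
      \<and> (\<forall>x\<in>{0..1}. v x = v 0 - (LINT t:{0..x}|lborel. f t))"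
    using assms unfolding is_positive_solution_def is_solution_def f_def
    by (rule conjunct1[OF conjunct1])
  then obtain v where du: "\<forall>x\<in>{0..1}. (u has_real_derivative v x) (at x within {0..1})"
    and cv: "continuous_on {0..1} v" and f_int: "set_integrable lborel {0..1} f"
    and v_eq: "\<forall>x\<in>{0..1}. v x = v 0 - (LINT t:{0..x}|lborel. f t)"
    by blast
  have cu: "continuous_on {0..1} u"
    unfolding continuous_on_eq_continuous_within using du DERIV_continuous by blast
  have du': "(u has_real_derivative v x) (at x)" if "x \<in> {0<..<1}" for x
  proof -
    have "at x within {0..1} = at x" using that by (intro at_within_interior) auto
    moreover have "(u has_real_derivative v x) (at x within {0..1})" using du that by auto
    ultimately show ?thesis by simp
  qed
  have v_integral: "v x = v 0 - integral {0..x} f" if "x \<in> {0..1}" for x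
  proof -
    have "set_integrable lborel {0..x} f"
      by (rule set_integrable_subset[OF f_int]) (use that in auto)
    then show ?thesis using v_eq[rule_format, OF that] by (simp add: set_borel_integral_eq_integral)
  qed
  have dv: "(v has_real_derivative - f x) (at x)" if x: "x \<in> {0<..<1}" "isCont a x" for x
  proof (rule has_real_derivative_of_integral_eq[OF _ _ v_integral x(1)])
    show "f integrable_on {0..1}" using f_int by (rule set_borel_integral_eq_integral(1))
    show "isCont f x"
      unfolding f_def using x pos[OF x(1)] DERIV_isCont[OF du'[OF x(1)]]
      by (intro continuous_intros) auto
  qed
  show ?thesis
    using cu cv du' dv bc pos
    by (intro that[of v]) (auto simp: classical_positive_solution_def f_def)
qed

lemma classical_positive_solution_reflect:
  assumes "classical_positive_solution p lam a u v"
  shows "classical_positive_solution p lam (\<lambda>x. a (1 - x)) (\<lambda>x. u (1 - x)) (\<lambda>x. - v (1 - x))"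
proof -
  have cu: "continuous_on {0..1} u" and cv: "continuous_on {0..1} v"
    and du: "\<And>x. x \<in> {0<..<1} \<Longrightarrow> (u has_real_derivative v x) (at x)"
    and dv: "\<And>x. x \<in> {0<..<1} \<Longrightarrow> isCont a x \<Longrightarrow>
               (v has_real_derivative - (lam * u x + a x * u x powr p)) (at x)"
    and bc: "u 0 = 0" "u 1 = 0" and pos: "\<And>x. x \<in> {0<..<1} \<Longrightarrow> u x > 0"
    using assms unfolding classical_positive_solution_def by auto
  have reflect: "((\<lambda>x. 1 - x) has_real_derivative - 1) (at x)" for x :: real
    by (auto intro!: derivative_eq_intros)
  have "((\<lambda>x. u (1 - x)) has_real_derivative - v (1 - x)) (at x)" if "x \<in> {0<..<1}" for x
    using DERIV_chain2[OF du reflect] that by simp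
  moreover have "((\<lambda>x. - v (1 - x)) has_real_derivative
      - (lam * u (1 - x) + a (1 - x) * u (1 - x) powr p)) (at x)"
    if "x \<in> {0<..<1}" "isCont (\<lambda>x. a (1 - x)) x" for x
  proof -
    have "isCont a (1 - x)"
      using continuous_at_compose[of "1 - x" "\<lambda>y. 1 - y" "\<lambda>x. a (1 - x)"] that
      by (simp add: o_def)
    then show ?thesis
      using DERIV_minus[OF DERIV_chain2[OF dv reflect]] that by (simp add: algebra_simps)
  qed
  moreover have "continuous_on {0..1} (\<lambda>x. u (1 - x))"
    by (rule continuous_on_compose2[OF cu]) (auto intro: continuous_intros)
  moreover have "continuous_on {0..1} (\<lambda>x. - v (1 - x))"
    by (intro continuous_on_minus continuous_on_compose2[OF cv]) (auto intro: continuous_intros)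
  ultimately show ?thesis
    unfolding classical_positive_solution_def using bc pos by auto
qed

lemma a_coef_reflect: "(\<lambda>x. a_coef h (1 - x)) = a_coef h"
  by (auto simp: a_coef_def fun_eq_iff)

lemma isCont_a_coef:
  assumes "x \<noteq> (1 - h) / 2" "x \<noteq> (1 + h) / 2"
  shows "isCont (a_coef h) x"
proof -
  have "\<forall>\<^sub>F y in nhds x. a_coef h y = a_coef h x"
  proof (cases "(1 - h) / 2 < x \<and> x < (1 + h) / 2")
    case True
    have "\<forall>\<^sub>F y in nhds x. y \<in> {(1 - h) / 2<..<(1 + h) / 2}"
      using True by (intro eventually_nhds_in_open) auto
    then show ?thesis by eventually_elim (use True in \<open>simp add: a_coef_def\<close>)
  next
    case False
    have "\<forall>\<^sub>F y in nhds x. y \<in> - {(1 - h) / 2..(1 + h) / 2}"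
      using False assms by (intro eventually_nhds_in_open) auto
    then show ?thesis by eventually_elim (use False in \<open>auto simp add: a_coef_def\<close>)
  qed
  then show ?thesis by (simp add: isCont_cong)
qed

lemma abs_le_sup_norm01:
  assumes "continuous_on {0..1} u" "x \<in> {0..1}"
  shows "\<bar>u x\<bar> \<le> sup_norm01 u"
proof -
  have "bounded ((\<lambda>x. \<bar>u x\<bar>) ` {0..1})"
    using assms(1) by (intro compact_imp_bounded compact_continuous_image continuous_intros) auto
  then show ?thesis
    unfolding sup_norm01_def using assms(2) by (intro cSUP_upper bounded_imp_bdd_above)
qed

lemma energy_conservation:
  fixes u v :: "real \<Rightarrow> real"
  assumes "\<alpha> < \<beta>" "p \<noteq> -1"
    and cu: "continuous_on {\<alpha>..\<beta>} u" and cv: "continuous_on {\<alpha>..\<beta>} v"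
    and pos: "\<And>x. x \<in> {\<alpha>..\<beta>} \<Longrightarrow> u x > 0"
    and du: "\<And>x. x \<in> {\<alpha><..<\<beta>} \<Longrightarrow> (u has_real_derivative v x) (at x)"
    and dv: "\<And>x. x \<in> {\<alpha><..<\<beta>} \<Longrightarrow> (v has_real_derivative - (lam * u x + u x powr p)) (at x)"
  shows "v \<beta>^2 + lam * u \<beta>^2 + 2 / (p + 1) * u \<beta> powr (p + 1)
       = v \<alpha>^2 + lam * u \<alpha>^2 + 2 / (p + 1) * u \<alpha> powr (p + 1)"
proof (rule DERIV_isconst_end[OF \<open>\<alpha> < \<beta>\<close>])
  show "continuous_on {\<alpha>..\<beta>} (\<lambda>x. v x^2 + lam * u x^2 + 2 / (p + 1) * u x powr (p + 1))"
    using cu cv pos by (intro continuous_intros) (auto simp: less_imp_neq[symmetric])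
next
  fix x assume x: "\<alpha> < x" "x < \<beta>"
  then have ux: "u x > 0" using pos by auto
  have "((\<lambda>x. v x^2) has_real_derivative 2 * v x * - (lam * u x + u x powr p)) (at x)"
    using DERIV_power[OF dv, of x 2] x by (simp add: ac_simps)
  moreover have "((\<lambda>x. u x^2) has_real_derivative 2 * u x * v x) (at x)"
    using DERIV_power[OF du, of x 2] x by (simp add: ac_simps)
  moreover have "((\<lambda>x. u x powr (p + 1)) has_real_derivative (p + 1) * u x powr p * v x) (at x)"
    using DERIV_fun_powr[OF du ux, of "p + 1"] x by simp
  ultimately have "((\<lambda>x. v x^2 + lam * u x^2 + 2 / (p + 1) * u x powr (p + 1)) has_real_derivative
      2 * v x * - (lam * u x + u x powr p) + lam * (2 * u x * v x)
      + 2 / (p + 1) * ((p + 1) * u x powr p * v x)) (at x)"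
    by (intro DERIV_add DERIV_cmult)
  moreover have "2 * v x * - (lam * u x + u x powr p) + lam * (2 * u x * v x)
      + 2 / (p + 1) * ((p + 1) * u x powr p * v x) = 0"
    using \<open>p \<noteq> -1\<close> by (simp add: field_simps)
  ultimately show "((\<lambda>x. v x^2 + lam * u x^2 + 2 / (p + 1) * u x powr (p + 1))
      has_real_derivative 0) (at x)" by simp
qed

lemma wronskian_constant:
  fixes y1 z1 y2 z2 :: "real \<Rightarrow> real"
  assumes "\<alpha> < \<beta>"
    and "continuous_on {\<alpha>..\<beta>} y1" "continuous_on {\<alpha>..\<beta>} z1"
    and "continuous_on {\<alpha>..\<beta>} y2" "continuous_on {\<alpha>..\<beta>} z2"
    and d1: "\<And>x. x \<in> {\<alpha><..<\<beta>} \<Longrightarrow> (y1 has_real_derivative z1 x) (at x)"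
    and d1': "\<And>x. x \<in> {\<alpha><..<\<beta>} \<Longrightarrow> (z1 has_real_derivative - (lam * y1 x)) (at x)"
    and d2: "\<And>x. x \<in> {\<alpha><..<\<beta>} \<Longrightarrow> (y2 has_real_derivative z2 x) (at x)"
    and d2': "\<And>x. x \<in> {\<alpha><..<\<beta>} \<Longrightarrow> (z2 has_real_derivative - (lam * y2 x)) (at x)"
    and "x \<in> {\<alpha>..\<beta>}"
  shows "y1 x * z2 x - z1 x * y2 x = y1 \<alpha> * z2 \<alpha> - z1 \<alpha> * y2 \<alpha>"
proof (rule DERIV_isconst2[where f = "\<lambda>x. y1 x * z2 x - z1 x * y2 x"])
  fix t assume "\<alpha> < t" "t < \<beta>"
  then have t: "t \<in> {\<alpha><..<\<beta>}" by simp
  show "((\<lambda>x. y1 x * z2 x - z1 x * y2 x) has_real_derivative 0) (at t)"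
    using DERIV_diff[OF DERIV_mult[OF d1[OF t] d2'[OF t]] DERIV_mult[OF d1'[OF t] d2[OF t]]]
    by (simp add: algebra_simps)
qed (use assms in \<open>auto intro!: continuous_intros\<close>)

lemma sq_le_of_deriv_sq_bound:
  fixes u v :: "real \<Rightarrow> real"
  assumes "continuous_on {a..b} u" "u a = 0"
    and du: "\<And>x. x \<in> {a<..<b} \<Longrightarrow> (u has_real_derivative v x) (at x)"
    and bound: "\<And>x. x \<in> {a<..<b} \<Longrightarrow> v x^2 \<le> K"
    and x: "x \<in> {a..b}"
  shows "u x^2 \<le> (x - a)^2 * K"
proof (cases "x = a")
  case False
  then have "a < x" using x by simp
  moreover have "continuous_on {a..x} u"
    by (rule continuous_on_subset[OF assms(1)]) (use x in auto)
  ultimately obtain \<xi> where \<xi>: "a < \<xi>" "\<xi> < x" "u x - u a = v \<xi> * (x - a)"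
    using mvt[of a x u "\<lambda>\<xi> h. v \<xi> * h"] du x
    by (metis greaterThanLessThan_iff atLeastAtMost_iff has_field_derivative_def less_le_trans)
  have "u x^2 = (x - a)^2 * v \<xi>^2" using \<xi>(3) \<open>u a = 0\<close> by (simp add: power_mult_distrib)
  also have "\<dots> \<le> (x - a)^2 * K" using bound[of \<xi>] \<xi> x by (intro mult_left_mono) auto
  finally show ?thesis .
qed (use \<open>u a = 0\<close> in simp)

lemma boundary_layer_sup_bound:
  fixes u v :: "real \<Rightarrow> real"
  assumes "0 < d" "p > -1"
    and cu: "continuous_on {0..d} u" and cv: "continuous_on {0..d} v"
    and "u 0 = 0" and pos: "\<And>x. x \<in> {0<..d} \<Longrightarrow> u x > 0"
    and du: "\<And>x. x \<in> {0<..<d} \<Longrightarrow> (u has_real_derivative v x) (at x)"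
    and dv: "\<And>x. x \<in> {0<..<d} \<Longrightarrow> (v has_real_derivative - (lam * u x + u x powr p)) (at x)"
  obtains m where "u d \<le> m"
    "m^2 \<le> d^2 * (v d^2 + lam * u d^2 + 2 / (p + 1) * u d powr (p + 1) + \<bar>lam\<bar> * m^2)"
proof -
  define E where "E = v d^2 + lam * u d^2 + 2 / (p + 1) * u d powr (p + 1)"
  obtain xm where xm: "xm \<in> {0..d}" and max: "\<And>x. x \<in> {0..d} \<Longrightarrow> u x \<le> u xm"
    using continuous_attains_sup[OF compact_Icc _ cu] \<open>0 < d\<close> by auto
  have v_bound: "v x^2 \<le> E + \<bar>lam\<bar> * u xm^2" if x: "x \<in> {0<..<d}" for x
  proof -
    have "E = v x^2 + lam * u x^2 + 2 / (p + 1) * u x powr (p + 1)"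
      unfolding E_def using x \<open>p > -1\<close>
      by (intro energy_conservation continuous_on_subset[OF cu] continuous_on_subset[OF cv]
          pos du dv) auto
    moreover have "- lam * u x^2 \<le> \<bar>lam\<bar> * u xm^2"
      using x pos[of x] max[of x] by (intro mult_mono power_mono) auto
    moreover have "0 \<le> 2 / (p + 1) * u x powr (p + 1)" using \<open>p > -1\<close> by simp
    ultimately show ?thesis by linarith
  qed
  have "u xm^2 \<le> (xm - 0)^2 * (E + \<bar>lam\<bar> * u xm^2)"
    by (rule sq_le_of_deriv_sq_bound[OF cu \<open>u 0 = 0\<close> du v_bound xm])
  also have "\<dots> \<le> d^2 * (E + \<bar>lam\<bar> * u xm^2)"
  proof (rule mult_right_mono)
    show "(xm - 0)^2 \<le> d^2" using xm by (intro power_mono) auto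
    show "0 \<le> E + \<bar>lam\<bar> * u xm^2"
      using order_trans[OF zero_le_power2 v_bound[of "d / 2"]] \<open>0 < d\<close> by simp
  qed
  finally show ?thesis
    using that[of "u xm"] max[of d] \<open>0 < d\<close> by (simp add: E_def)
qed

lemma boundary_layer_lower_bound:
  fixes u v :: "real \<Rightarrow> real"
  assumes "0 < d" "p > -1"
    and cu: "continuous_on {0..d} u" and cv: "continuous_on {0..d} v"
    and "u 0 = 0" and pos: "\<And>x. x \<in> {0<..d} \<Longrightarrow> u x > 0"
    and du: "\<And>x. x \<in> {0<..<d} \<Longrightarrow> (u has_real_derivative v x) (at x)"
    and dv: "\<And>x. x \<in> {0<..<d} \<Longrightarrow> (v has_real_derivative - (lam * u x + u x powr p)) (at x)"
    and vd: "\<bar>v d\<bar> \<le> B * u d"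
  shows "1 \<le> d^2 * (B^2 + 2 * \<bar>lam\<bar>) + d^2 * (2 / (p + 1)) * u d powr (p - 1)"
proof -
  define c where "c = 2 / (p + 1)"
  define E where "E = v d^2 + lam * u d^2 + c * u d powr (p + 1)"
  define K where "K = B^2 + 2 * \<bar>lam\<bar> + c * u d powr (p - 1)"
  obtain m where "u d \<le> m" and m: "m^2 \<le> d^2 * (E + \<bar>lam\<bar> * m^2)"
    using boundary_layer_sup_bound[OF assms(1-8)] unfolding E_def c_def by blast
  have ud: "u d > 0" using pos \<open>0 < d\<close> by simp
  have "u d powr (p + 1) = u d powr ((p - 1) + 2)" by (simp add: algebra_simps)
  also have "\<dots> = u d powr (p - 1) * u d^2" using ud by (simp only: powr_add powr_numeral)
  finally have "c * u d powr (p + 1) = c * u d powr (p - 1) * u d^2" by simp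
  moreover have "v d^2 \<le> B^2 * u d^2"
    using vd ud by (metis abs_ge_zero power2_abs power_mono power_mult_distrib)
  moreover have "lam * u d^2 \<le> \<bar>lam\<bar> * u d^2" by (intro mult_right_mono) auto
  ultimately have "E \<le> B^2 * u d^2 + \<bar>lam\<bar> * u d^2 + c * u d powr (p - 1) * u d^2"
    unfolding E_def by linarith
  also have "\<dots> = (K - \<bar>lam\<bar>) * u d^2" unfolding K_def by (simp add: algebra_simps)
  also have "\<dots> \<le> (K - \<bar>lam\<bar>) * m^2"
    using ud \<open>u d \<le> m\<close> \<open>p > -1\<close> unfolding K_def c_def by (intro mult_left_mono power_mono) auto
  finally have "d^2 * (E + \<bar>lam\<bar> * m^2) \<le> d^2 * (K * m^2)"
    by (intro mult_left_mono) (auto simp: algebra_simps)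
  with m have "1 * m^2 \<le> (d^2 * K) * m^2" by simp
  moreover have "m^2 > 0" using ud \<open>u d \<le> m\<close> by simp
  ultimately have "1 \<le> d^2 * K" by (rule mult_right_le_imp_le)
  then show ?thesis unfolding K_def c_def by (simp add: algebra_simps)
qed

lemma linear_segment_values:
  fixes u v :: "real \<Rightarrow> real"
  assumes "\<alpha> < \<beta>" and cu: "continuous_on {\<alpha>..\<beta>} u" and cv: "continuous_on {\<alpha>..\<beta>} v"
    and du: "\<And>x. x \<in> {\<alpha><..<\<beta>} \<Longrightarrow> (u has_real_derivative v x) (at x)"
    and dv: "\<And>x. x \<in> {\<alpha><..<\<beta>} \<Longrightarrow> (v has_real_derivative - (lam * u x)) (at x)"
  shows "v \<alpha> * osc_sin lam (\<beta> - \<alpha>) = u \<beta> - u \<alpha> * osc_cos lam (\<beta> - \<alpha>)"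
    and "\<And>x. x \<in> {\<alpha>..\<beta>} \<Longrightarrow>
           u x * osc_sin lam (\<beta> - \<alpha>) = u \<alpha> * osc_sin lam (\<beta> - x) + u \<beta> * osc_sin lam (x - \<alpha>)"
proof -
  define \<sigma> where "\<sigma> x = osc_sin lam (x - \<alpha>)" for x
  define \<sigma>' where "\<sigma>' x = osc_cos lam (x - \<alpha>)" for x
  define \<tau> where "\<tau> x = osc_sin lam (\<beta> - x)" for x
  define \<tau>' where "\<tau>' x = - osc_cos lam (\<beta> - x)" for x
  have shift: "((\<lambda>x. x - \<alpha>) has_real_derivative 1) (at x)"
    and reflect: "((\<lambda>x. \<beta> - x) has_real_derivative - 1) (at x)" for x
    by (auto intro!: derivative_eq_intros)
  have d\<sigma>: "(\<sigma> has_real_derivative \<sigma>' x) (at x)"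
    and d\<sigma>': "(\<sigma>' has_real_derivative - (lam * \<sigma> x)) (at x)"
    and d\<tau>: "(\<tau> has_real_derivative \<tau>' x) (at x)"
    and d\<tau>': "(\<tau>' has_real_derivative - (lam * \<tau> x)) (at x)" for x
    unfolding \<sigma>_def \<sigma>'_def \<tau>_def \<tau>'_def
    using DERIV_chain2[OF has_real_derivative_osc_sin shift]
      DERIV_chain2[OF has_real_derivative_osc_cos shift]
      DERIV_chain2[OF has_real_derivative_osc_sin reflect]
      DERIV_minus[OF DERIV_chain2[OF has_real_derivative_osc_cos reflect]]
    by simp_all
  have cont: "continuous_on {\<alpha>..\<beta>} \<sigma>" "continuous_on {\<alpha>..\<beta>} \<sigma>'"
    "continuous_on {\<alpha>..\<beta>} \<tau>" "continuous_on {\<alpha>..\<beta>} \<tau>'"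
    using d\<sigma> d\<sigma>' d\<tau> d\<tau>' by (meson DERIV_isCont continuous_at_imp_continuous_on)+
  note wronskian = wronskian_constant[OF \<open>\<alpha> < \<beta>\<close>]
  have W_u\<sigma>: "u x * \<sigma>' x - v x * \<sigma> x = u \<alpha>" if "x \<in> {\<alpha>..\<beta>}" for x
    using wronskian[OF cu cv cont(1,2) du dv d\<sigma> d\<sigma>' that] by (simp add: \<sigma>_def \<sigma>'_def)
  have W_u\<tau>: "u x * \<tau>' x - v x * \<tau> x = - u \<beta>" if "x \<in> {\<alpha>..\<beta>}" for x
    using wronskian[OF cu cv cont(3,4) du dv d\<tau> d\<tau>' that]
      wronskian[OF cu cv cont(3,4) du dv d\<tau> d\<tau>', of \<beta>] \<open>\<alpha> < \<beta>\<close>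
    by (simp add: \<tau>_def \<tau>'_def)
  have W_\<sigma>\<tau>: "\<sigma> x * \<tau>' x - \<sigma>' x * \<tau> x = - osc_sin lam (\<beta> - \<alpha>)" if "x \<in> {\<alpha>..\<beta>}" for x
    using wronskian[OF cont d\<sigma> d\<sigma>' d\<tau> d\<tau>' that] by (simp add: \<sigma>_def \<sigma>'_def \<tau>_def \<tau>'_def)
  show "v \<alpha> * osc_sin lam (\<beta> - \<alpha>) = u \<beta> - u \<alpha> * osc_cos lam (\<beta> - \<alpha>)"
    using W_u\<tau>[of \<alpha>] \<open>\<alpha> < \<beta>\<close> by (simp add: \<tau>_def \<tau>'_def algebra_simps)
  show "u x * osc_sin lam (\<beta> - \<alpha>) = u \<alpha> * osc_sin lam (\<beta> - x) + u \<beta> * osc_sin lam (x - \<alpha>)"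
    if "x \<in> {\<alpha>..\<beta>}" for x
  proof -
    have "u x * osc_sin lam (\<beta> - \<alpha>) = - u x * (\<sigma> x * \<tau>' x - \<sigma>' x * \<tau> x)"
      using W_\<sigma>\<tau>[OF that] by simp
    also have "\<dots> = (u x * \<sigma>' x - v x * \<sigma> x) * \<tau> x - (u x * \<tau>' x - v x * \<tau> x) * \<sigma> x"
      by (simp add: algebra_simps)
    also have "\<dots> = u \<alpha> * \<tau> x + u \<beta> * \<sigma> x"
      using W_u\<sigma>[OF that] W_u\<tau>[OF that] by simp
    finally show ?thesis by (simp add: \<sigma>_def \<tau>_def)
  qed
qed

lemma middle_segment_values:
  assumes sol: "classical_positive_solution p lam (a_coef h) u v" and h: "h \<in> {0<..<1}"
  shows "v ((1 - h) / 2) * osc_sin lam h = u ((1 + h) / 2) - u ((1 - h) / 2) * osc_cos lam h"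
    and "\<And>x. x \<in> {(1 - h) / 2..(1 + h) / 2} \<Longrightarrow> u x * osc_sin lam h
           = u ((1 - h) / 2) * osc_sin lam ((1 + h) / 2 - x) + u ((1 + h) / 2) * osc_sin lam (x - (1 - h) / 2)"
proof -
  have cu: "continuous_on {0..1} u" and cv: "continuous_on {0..1} v"
    and du: "\<And>x. x \<in> {0<..<1} \<Longrightarrow> (u has_real_derivative v x) (at x)"
    and dv: "\<And>x. x \<in> {0<..<1} \<Longrightarrow> isCont (a_coef h) x \<Longrightarrow>
               (v has_real_derivative - (lam * u x + a_coef h x * u x powr p)) (at x)"
    using sol unfolding classical_positive_solution_def by auto
  have dv_middle: "(v has_real_derivative - (lam * u x)) (at x)"
    if "x \<in> {(1 - h) / 2<..<(1 + h) / 2}" for x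
    using dv[of x] isCont_a_coef[of x h] that h by (auto simp: a_coef_def)
  have middle: "{(1 - h) / 2..(1 + h) / 2} \<subseteq> {0..1}" using h by auto
  have du_middle: "(u has_real_derivative v x) (at x)"
    if "x \<in> {(1 - h) / 2<..<(1 + h) / 2}" for x
    using du[of x] that h by auto
  have width: "(1 + h) / 2 - (1 - h) / 2 = h" by (simp add: field_simps)
  note segment = linear_segment_values[OF _ continuous_on_subset[OF cu middle]
      continuous_on_subset[OF cv middle] du_middle dv_middle, unfolded width]
  show "v ((1 - h) / 2) * osc_sin lam h = u ((1 + h) / 2) - u ((1 - h) / 2) * osc_cos lam h"
    and "\<And>x. x \<in> {(1 - h) / 2..(1 + h) / 2} \<Longrightarrow> u x * osc_sin lam h
           = u ((1 - h) / 2) * osc_sin lam ((1 + h) / 2 - x) + u ((1 + h) / 2) * osc_sin lam (x - (1 - h) / 2)"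
    using segment h by auto
qed

definition edge_max :: "(real \<Rightarrow> real) \<Rightarrow> real \<Rightarrow> real" where
  "edge_max u h = max (u ((1 - h) / 2)) (u ((1 + h) / 2))"

lemma boundary_estimate_left:
  assumes "p > -1" and h: "h \<in> {0<..<1}"
    and sol: "classical_positive_solution p lam (a_coef h) u v"
    and larger: "u ((1 + h) / 2) \<le> u ((1 - h) / 2)"
    and C: "\<bar>osc_cos lam h\<bar> \<le> C" and s: "0 < s" "s \<le> osc_sin lam h"
  shows "1 \<le> ((1 - h) / 2)^2 * (((1 + C) / s)^2 + 2 * \<bar>lam\<bar>)
             + ((1 - h) / 2)^2 * (2 / (p + 1)) * u ((1 - h) / 2) powr (p - 1)"
proof -
  define d where "d = (1 - h) / 2"
  have d: "0 < d" "d < 1 - d" and right_end: "(1 + h) / 2 = 1 - d"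
    using h by (auto simp: d_def field_simps)
  have cu: "continuous_on {0..1} u" and cv: "continuous_on {0..1} v"
    and du: "\<And>x. x \<in> {0<..<1} \<Longrightarrow> (u has_real_derivative v x) (at x)"
    and dv: "\<And>x. x \<in> {0<..<1} \<Longrightarrow> isCont (a_coef h) x \<Longrightarrow>
               (v has_real_derivative - (lam * u x + a_coef h x * u x powr p)) (at x)"
    and "u 0 = 0" and pos: "\<And>x. x \<in> {0<..<1} \<Longrightarrow> u x > 0"
    using sol unfolding classical_positive_solution_def by auto
  have "\<bar>v d\<bar> * s \<le> \<bar>v d * osc_sin lam h\<bar>"
    using s by (simp add: abs_mult mult_left_mono)
  also have "\<dots> = \<bar>u (1 - d) - u d * osc_cos lam h\<bar>"
    using middle_segment_values(1)[OF sol h] unfolding d_def[symmetric] right_end by simp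
  also have "\<dots> \<le> u (1 - d) + u d * \<bar>osc_cos lam h\<bar>"
    using abs_triangle_ineq4[of "u (1 - d)" "u d * osc_cos lam h"] pos[of d] pos[of "1 - d"] d
    by (simp add: abs_mult)
  also have "\<dots> \<le> (1 + C) * u d"
  proof -
    have "u d * \<bar>osc_cos lam h\<bar> \<le> u d * C" using C pos[of d] d by (intro mult_left_mono) auto
    then show ?thesis using larger unfolding d_def[symmetric] right_end by (simp add: algebra_simps)
  qed
  finally have "\<bar>v d\<bar> \<le> (1 + C) / s * u d" using s(1) by (simp add: field_simps)
  then show ?thesis
    unfolding d_def[symmetric]
  proof (rule boundary_layer_lower_bound[where u = u and v = v and lam = lam, rotated -1])
    show "0 < d" "p > -1" "u 0 = 0" by fact+
    show "continuous_on {0..d} u" "continuous_on {0..d} v"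
      using d by (auto intro: continuous_on_subset[OF cu] continuous_on_subset[OF cv])
    show "\<And>x. x \<in> {0<..d} \<Longrightarrow> u x > 0" "\<And>x. x \<in> {0<..<d} \<Longrightarrow> (u has_real_derivative v x) (at x)"
      using pos du d by auto
    show "(v has_real_derivative - (lam * u x + u x powr p)) (at x)" if "x \<in> {0<..<d}" for x
    proof -
      have x: "x \<in> {0<..<1}" and "a_coef h x = 1"
        using that h by (auto simp: a_coef_def d_def field_simps)
      moreover have "isCont (a_coef h) x"
        using that h by (intro isCont_a_coef) (auto simp: d_def field_simps)
      ultimately show ?thesis using dv[OF x] by simp
    qed
  qed
qed

lemma boundary_estimate:
  assumes "p > -1" and h: "h \<in> {0<..<1}"
    and sol: "classical_positive_solution p lam (a_coef h) u v"
    and C: "\<bar>osc_cos lam h\<bar> \<le> C" and s: "0 < s" "s \<le> osc_sin lam h"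
  shows "1 \<le> ((1 - h) / 2)^2 * (((1 + C) / s)^2 + 2 * \<bar>lam\<bar>)
             + ((1 - h) / 2)^2 * (2 / (p + 1)) * edge_max u h powr (p - 1)"
proof (cases "u ((1 + h) / 2) \<le> u ((1 - h) / 2)")
  case True
  then show ?thesis
    using boundary_estimate_left[OF assms(1,2) sol True C s] by (simp add: edge_max_def max_def)
next
  case False
  have reflected: "classical_positive_solution p lam (a_coef h) (\<lambda>x. u (1 - x)) (\<lambda>x. - v (1 - x))"
    using classical_positive_solution_reflect[OF sol] by (simp add: a_coef_reflect)
  have ends: "1 - (1 + h) / 2 = (1 - h) / 2" "1 - (1 - h) / 2 = (1 + h) / 2"
    by (simp_all add: field_simps)
  show ?thesis
    using boundary_estimate_left[OF assms(1,2) reflected _ C s, unfolded ends] False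
    by (simp add: edge_max_def max_def)
qed

lemma edge_max_tendsto_at_top:
  fixes U V :: "real \<Rightarrow> real \<Rightarrow> real"
  assumes "p > 1" "lam < pi^2"
    and sol: "\<And>h. h \<in> {0..<1} \<Longrightarrow> classical_positive_solution p lam (a_coef h) (U h) (V h)"
  shows "filterlim (\<lambda>h. edge_max (U h) h) at_top (at_left 1)"
proof -
  define M where "M h = edge_max (U h) h" for h
  obtain C where C: "\<And>t. t \<in> {0..1} \<Longrightarrow> \<bar>osc_cos lam t\<bar> \<le> C"
    using osc_abs_bounds by metis
  obtain s where s: "s > 0" "\<And>t. t \<in> {1/2..1} \<Longrightarrow> s \<le> osc_sin lam t"
    using osc_sin_lower_bound[OF \<open>lam < pi^2\<close>, of "1/2"] by auto
  define K where "K = ((1 + C) / s)^2 + 2 * \<bar>lam\<bar>"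
  define c where "c = 2 / (p + 1)"
  have "c > 0" using \<open>p > 1\<close> by (simp add: c_def)
  have near_1: "\<forall>\<^sub>F h in at_left (1::real). h \<in> {1/2<..<1}"
    by (rule eventually_at_left_real) simp
  have "\<forall>\<^sub>F h in at_left 1. (4 / (1 - h)^2 - K) / c \<le> M h powr (p - 1)"
    using near_1
  proof eventually_elim
    case (elim h)
    then have "1 \<le> ((1 - h) / 2)^2 * K + ((1 - h) / 2)^2 * c * M h powr (p - 1)"
      using boundary_estimate[of p h lam "U h" "V h" C s] sol[of h] C[of h] s \<open>p > 1\<close>
      unfolding K_def c_def M_def by auto
    then show ?case using elim \<open>c > 0\<close> by (simp add: field_simps power_divide)
  qed
  moreover have "filterlim (\<lambda>h. (4 / (1 - h)^2 - K) / c) at_top (at_left 1)"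
    using \<open>c > 0\<close> by real_asymp
  ultimately have "filterlim (\<lambda>h. M h powr (p - 1)) at_top (at_left 1)"
    by (rule filterlim_at_top_mono[rotated])
  then have "filterlim (\<lambda>h. (M h powr (p - 1)) powr (1 / (p - 1))) at_top (at_left 1)"
    using real_powr_at_top[of "1 / (p - 1)"] \<open>p > 1\<close> filterlim_compose by auto
  moreover have "\<forall>\<^sub>F h in at_left 1. (M h powr (p - 1)) powr (1 / (p - 1)) = M h"
    using near_1
  proof eventually_elim
    case (elim h)
    then have "M h > 0"
      using sol[of h] by (auto simp: M_def edge_max_def classical_positive_solution_def less_max_iff_disj)
    then show ?case using \<open>p > 1\<close> by (simp add: powr_powr)
  qed
  ultimately show ?thesis unfolding M_def by (simp add: filterlim_cong)
qed

lemma interior_value_ge_edge_max: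
  fixes U V :: "real \<Rightarrow> real \<Rightarrow> real"
  assumes "lam < pi^2" and x: "x \<in> {0<..<1}"
    and sol: "\<And>h. h \<in> {0..<1} \<Longrightarrow> classical_positive_solution p lam (a_coef h) (U h) (V h)"
  obtains \<kappa> where "\<kappa> > 0" "\<forall>\<^sub>F h in at_left 1. \<kappa> * edge_max (U h) h \<le> U h x"
proof -
  define \<eta> where "\<eta> = min x (1 - x) / 2"
  have \<eta>: "0 < \<eta>" "\<eta> \<le> x / 2" "\<eta> \<le> (1 - x) / 2" using x by (auto simp: \<eta>_def)
  obtain s where s: "s > 0" "\<And>t. t \<in> {\<eta>..1} \<Longrightarrow> s \<le> osc_sin lam t"
    using osc_sin_lower_bound[OF \<open>lam < pi^2\<close> \<open>0 < \<eta>\<close>] \<eta> x by auto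
  obtain S where S: "\<And>t. t \<in> {0..1} \<Longrightarrow> \<bar>osc_sin lam t\<bar> \<le> S"
    using osc_abs_bounds by metis
  have "S > 0" using S[of 1] osc_sin_pos[OF \<open>lam < pi^2\<close>, of 1] by simp
  have "\<forall>\<^sub>F h in at_left 1. h \<in> {1 - 2 * \<eta><..<1}"
    using \<eta> by (intro eventually_at_left_real) auto
  then have "\<forall>\<^sub>F h in at_left 1. s / S * edge_max (U h) h \<le> U h x"
  proof eventually_elim
    case (elim h)
    define d where "d = (1 - h) / 2"
    have h: "h \<in> {0<..<1}" and "0 < d" "d \<le> \<eta>" and right_end: "(1 + h) / 2 = 1 - d"
      using elim \<eta> x by (auto simp: d_def field_simps)
    have sol_h: "classical_positive_solution p lam (a_coef h) (U h) (V h)" using sol h by auto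
    then have pos: "\<And>y. y \<in> {0<..<1} \<Longrightarrow> U h y > 0"
      by (simp add: classical_positive_solution_def)
    have "0 < U h d" "0 < U h (1 - d)" using pos \<eta> \<open>d \<le> \<eta>\<close> h by (auto simp: d_def)
    moreover have "s \<le> osc_sin lam (1 - d - x)" "s \<le> osc_sin lam (x - d)"
      using s(2) \<eta> \<open>0 < d\<close> \<open>d \<le> \<eta>\<close> by auto
    ultimately have "s * U h d \<le> U h d * osc_sin lam (1 - d - x)"
      and "s * U h (1 - d) \<le> U h (1 - d) * osc_sin lam (x - d)"
      and "s * max (U h d) (U h (1 - d)) \<le> s * U h d + s * U h (1 - d)"
      using \<open>s > 0\<close> by (simp_all add: mult.commute mult_left_mono max_def)
    then have "s * max (U h d) (U h (1 - d))
        \<le> U h d * osc_sin lam (1 - d - x) + U h (1 - d) * osc_sin lam (x - d)" by linarith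
    also have "\<dots> = U h x * osc_sin lam h"
      using middle_segment_values(2)[OF sol_h h, of x] \<eta> \<open>d \<le> \<eta>\<close>
      unfolding d_def[symmetric] right_end by simp
    also have "\<dots> \<le> U h x * S"
      using S[of h] pos[OF x] h by (intro mult_left_mono) auto
    finally have "s * max (U h d) (U h (1 - d)) \<le> U h x * S" .
    then show ?case
      using \<open>S > 0\<close> unfolding edge_max_def right_end d_def by (simp add: field_simps)
  qed
  then show ?thesis using that[of "s / S"] \<open>s > 0\<close> \<open>S > 0\<close> by simp
qed

theorem theorem3p1:
  fixes p lam :: real and U :: "real \<Rightarrow> real \<Rightarrow> real"
  assumes "p > 1" and "lam < pi^2"
    and "\<And>h. h \<in> {0..<1} \<Longrightarrow> is_positive_solution p lam (a_coef h) (U h)"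
  shows "filterlim (\<lambda>h. sup_norm01 (U h)) at_top (at_left 1)
    \<and> (\<forall>x\<in>{0<..<1}. filterlim (\<lambda>h. U h x) at_top (at_left 1))"
proof -
  have "\<forall>h\<in>{0..<1}. \<exists>v. classical_positive_solution p lam (a_coef h) (U h) v"
    using positive_solution_imp_classical[OF assms(3)] by metis
  then obtain V where sol: "\<And>h. h \<in> {0..<1} \<Longrightarrow> classical_positive_solution p lam (a_coef h) (U h) (V h)"
    by (metis bchoice)
  have pointwise: "filterlim (\<lambda>h. U h x) at_top (at_left 1)" if x: "x \<in> {0<..<1}" for x
  proof -
    obtain \<kappa> where "\<kappa> > 0" and below: "\<forall>\<^sub>F h in at_left 1. \<kappa> * edge_max (U h) h \<le> U h x"
      using interior_value_ge_edge_max[OF assms(2) x sol] by blast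
    have "filterlim (\<lambda>h. \<kappa> * edge_max (U h) h) at_top (at_left 1)"
      using edge_max_tendsto_at_top[OF assms(1,2) sol] \<open>\<kappa> > 0\<close>
      by (intro filterlim_tendsto_pos_mult_at_top[OF tendsto_const])
    then show ?thesis using below by (rule filterlim_at_top_mono)
  qed
  have "\<forall>\<^sub>F h in at_left 1. h \<in> {0<..<1::real}"
    by (rule eventually_at_left_real) simp
  then have "\<forall>\<^sub>F h in at_left 1. U h (1/2) \<le> sup_norm01 (U h)"
  proof eventually_elim
    case (elim h)
    then show ?case
      using abs_le_sup_norm01[of "U h" "1/2"] sol[of h] by (auto simp: classical_positive_solution_def)
  qed
  with pointwise[of "1/2"] have "filterlim (\<lambda>h. sup_norm01 (U h)) at_top (at_left 1)"
    by (auto intro: filterlim_at_top_mono)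
  with pointwise show ?thesis by blast
qed

end
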